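(* Let $r>0$, $V_T>0$ and $R_0\ge r$. Define $$f(t,V_s)=1+\frac{1}{2R_0(R_0+r)}\left(r^2-V_T^2\left(\frac{2\pi R_0}{V_s}+t\right)^2\right)-\cos\!\left(\frac{V_s t}{R_0}\right)$$ and $$V_c=\frac{\left(2\pi+\arcsin\frac{r}{R_0}\right)R_0V_T}{r}.$$ Then the minimum of $t\mapsto f(t,V_c)$ over $0\le t\le \frac{\pi R_0}{2V_c}$ is strictly positive, that is, $f(t^*,V_c)>0$ at the minimizer $t^*$. In particular $f(t,V_c)\ge 0$ for all $t\in\left[0,\frac{\pi R_0}{2V_c}\right]$.
   Context: $R_0$ is the initial radius of the disk containing the evaders, $2r$ is the length of the sweeper's line sensor, $V_T$ is the maximal evader speed, and $V_c$ is a candidate sweeper speed. The condition $f(t,V_s)\ge 0$ for $0\le t\le \pi R_0/(2V_s)$ is the paper's criterion for the sweeper to be fast enough to accomplish the confinement task. *)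

theory Defs
  imports "HOL-Analysis.Analysis"
begin

definition sweep_f :: "real \<Rightarrow> real \<Rightarrow> real \<Rightarrow> real \<Rightarrow> real \<Rightarrow> real" where
  "sweep_f R0 r VT t Vs =
     1 + (1 / (2 * R0 * (R0 + r))) * (r^2 - VT^2 * (2 * pi * R0 / Vs + t)^2)
       - cos (Vs * t / R0)"

definition sweep_Vc :: "real \<Rightarrow> real \<Rightarrow> real \<Rightarrow> real" where
  "sweep_Vc R0 r VT = (2 * pi + arcsin (r / R0)) * R0 * VT / r"

end

theory Submission
  imports Defs
begin

text \<open>With \<open>a = arcsin (r / R0)\<close> and the angle \<open>s = V\<^sub>c t / R0 \<in> [0, \<pi>/2]\<close>, the choice of
  \<open>V\<^sub>c\<close> makes \<open>V\<^sub>T (2\<pi>R0 / V\<^sub>c + t) = r (2\<pi> + s) / (2\<pi> + a)\<close>, so that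
  \<open>f = (1 - cos s) - c (q - 1)\<close> with \<open>q = ((2\<pi> + s) / (2\<pi> + a))\<^sup>2\<close> and \<open>c = r\<^sup>2 / (2 R0 (R0 + r))\<close>.
  For \<open>s \<le> a\<close> the correction term is nonpositive (and negative at \<open>s = 0\<close>). For \<open>s > a\<close> we have
  \<open>q - 1 \<le> 9/16\<close> and \<open>c \<le> sin\<^sup>2 a / 2 \<le> sin\<^sup>2 s / 2 \<le> 1 - cos s\<close>, so \<open>f \<ge> (7/16) (1 - cos s) > 0\<close>.
  A continuous function on a compact interval attains its minimum, which is therefore positive.\<close>

lemma arcsin_ratio_pos:
  fixes r R :: real
  assumes "0 < r" and "r \<le> R"
  shows "0 < arcsin (r / R)"
  using assms arcsin_less_arcsin[of 0 "r / R"] by (simp add: divide_le_eq_1)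

lemma half_sin_sq_le_one_minus_cos:
  fixes x :: real
  shows "sin x ^ 2 / 2 \<le> 1 - cos x"
proof -
  have "sin x ^ 2 = (1 - cos x) * (1 + cos x)"
    by (simp add: sin_squared_eq power2_eq_square algebra_simps)
  also have "\<dots> \<le> (1 - cos x) * 2"
    using cos_le_one[of x] by (intro mult_left_mono) auto
  finally show ?thesis by simp
qed

lemma sq_div_le_half_sq_ratio:
  fixes r R :: real
  assumes "0 \<le> r" and "0 < R"
  shows "r ^ 2 / (2 * R * (R + r)) \<le> (r / R) ^ 2 / 2"
proof -
  have "r ^ 2 / (2 * R * (R + r)) \<le> r ^ 2 / (2 * R * R)"
    using assms by (intro divide_left_mono mult_left_mono) auto
  also have "\<dots> = (r / R) ^ 2 / 2"
    by (simp add: power2_eq_square)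
  finally show ?thesis .
qed

lemma sq_ratio_excess_le:
  fixes a s :: real
  assumes "0 \<le> a" and "0 \<le> s" and "s \<le> pi / 2"
  shows "((2 * pi + s) / (2 * pi + a)) ^ 2 - 1 \<le> 9 / 16"
proof -
  have "0 < 2 * pi" "0 < 2 * pi + a" using assms pi_gt_zero by linarith+
  then have "(2 * pi + s) / (2 * pi + a) \<le> (2 * pi + s) / (2 * pi)"
    using assms by (intro divide_left_mono mult_pos_pos) auto
  also have "\<dots> \<le> 5 / 4"
    using assms pi_gt_zero by (simp add: field_simps)
  finally have "((2 * pi + s) / (2 * pi + a)) ^ 2 \<le> (5 / 4) ^ 2"
    using assms pi_gt_zero by (intro power_mono) auto
  then show ?thesis by (simp add: power2_eq_square)
qed

lemma scaled_sq_ratio_excess_lt_one_minus_cos: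
  fixes a s c :: real
  assumes a: "0 < a" and s: "0 \<le> s" "s \<le> pi / 2"
    and c: "0 < c" "c \<le> sin a ^ 2 / 2"
  shows "c * (((2 * pi + s) / (2 * pi + a)) ^ 2 - 1) < 1 - cos s"
proof -
  define q where "q = ((2 * pi + s) / (2 * pi + a)) ^ 2"
  have pa: "2 * pi + a > 0" using a pi_gt_zero by linarith
  have cos_lt: "cos s < 1" if "0 < s"
    using that s cos_monotone_0_pi[of 0 s] by simp
  consider "s = 0" | "0 < s" "s \<le> a" | "a < s" using s by linarith
  then show ?thesis
  proof cases
    case 1
    have "2 * pi < 2 * pi + a" using a by simp
    then have "2 * pi / (2 * pi + a) < 1" using divide_less_eq_1_pos[OF pa] by blast
    moreover have "0 \<le> 2 * pi / (2 * pi + a)" using pa by simp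
    ultimately have "q < 1" unfolding q_def 1 by (simp add: power_less_one_iff)
    then show ?thesis using c 1 unfolding q_def[symmetric] by (simp add: mult_pos_neg)
  next
    case 2
    then have "q \<le> 1" unfolding q_def using pa by (simp add: power_le_one divide_le_eq_1)
    then have "c * (q - 1) \<le> 0" using c by (simp add: mult_nonneg_nonpos)
    then show ?thesis using cos_lt 2 unfolding q_def by linarith
  next
    case 3
    have "sin a \<le> sin s" using 3 a s sin_monotone_2pi_le[of a s] by simp
    moreover have "0 \<le> sin a" using a 3 s by (intro sin_ge_zero) auto
    ultimately have "sin a ^ 2 \<le> sin s ^ 2" by (rule power_mono)
    then have "c \<le> sin s ^ 2 / 2" using c by linarith
    also have "\<dots> \<le> 1 - cos s" by (rule half_sin_sq_le_one_minus_cos)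
    finally have "c \<le> 1 - cos s" .
    moreover have "1 \<le> q" unfolding q_def using 3 pa by (simp add: one_le_power)
    ultimately have "c * (q - 1) \<le> (1 - cos s) * (9 / 16)"
      using c a s sq_ratio_excess_le[of a s] unfolding q_def by (intro mult_mono) auto
    moreover have "cos s < 1" using 3 a by (intro cos_lt) linarith
    ultimately show ?thesis unfolding q_def by argo
  qed
qed

lemma sweep_Vc_pos:
  fixes r VT R0 :: real
  assumes "r > 0" and "VT > 0" and "R0 \<ge> r"
  shows "sweep_Vc R0 r VT > 0"
proof -
  have "0 < 2 * pi + arcsin (r / R0)"
    using arcsin_ratio_pos[OF assms(1,3)] pi_gt_zero by linarith
  then show ?thesis unfolding sweep_Vc_def using assms by simp
qed

lemma sweep_f_at_Vc:
  fixes r VT R0 :: real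
  assumes "r > 0" and "VT > 0" and "R0 \<ge> r"
    and s: "s = sweep_Vc R0 r VT * t / R0"
  shows "sweep_f R0 r VT t (sweep_Vc R0 r VT) =
           1 - cos s - r ^ 2 / (2 * R0 * (R0 + r)) *
             (((2 * pi + s) / (2 * pi + arcsin (r / R0))) ^ 2 - 1)"
proof -
  define a where "a = arcsin (r / R0)"
  define V where "V = sweep_Vc R0 r VT"
  have R0: "R0 > 0" using assms by linarith
  have V: "V = (2 * pi + a) * R0 * VT / r" unfolding V_def a_def sweep_Vc_def by simp
  have "V > 0" unfolding V_def using assms(1-3) by (rule sweep_Vc_pos)
  have "VT * R0 / V = (VT * R0) * r / ((VT * R0) * (2 * pi + a))"
    unfolding V by (simp add: ac_simps)
  also have "\<dots> = r / (2 * pi + a)"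
    using assms R0 by simp
  finally have "VT * R0 / V = r / (2 * pi + a)" .
  moreover have "VT * (2 * pi * R0 / V + t) = VT * R0 / V * (2 * pi + s)"
    unfolding s V_def[symmetric] using R0 \<open>V > 0\<close> by (simp add: field_simps)
  ultimately have "VT * (2 * pi * R0 / V + t) = r * (2 * pi + s) / (2 * pi + a)"
    by simp
  then have "VT ^ 2 * (2 * pi * R0 / V + t) ^ 2 = r ^ 2 * ((2 * pi + s) / (2 * pi + a)) ^ 2"
    by (metis power_mult_distrib times_divide_eq_right)
  then show ?thesis
    unfolding sweep_f_def V_def[symmetric] a_def[symmetric] s[folded V_def]
    by (simp add: algebra_simps)
qed

lemma sweep_f_at_Vc_pos:
  fixes r VT R0 :: real
  assumes "r > 0" and "VT > 0" and "R0 \<ge> r"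
    and t: "t \<in> {0 .. pi * R0 / (2 * sweep_Vc R0 r VT)}"
  shows "sweep_f R0 r VT t (sweep_Vc R0 r VT) > 0"
proof -
  define V where "V = sweep_Vc R0 r VT"
  define a where "a = arcsin (r / R0)"
  define c where "c = r ^ 2 / (2 * R0 * (R0 + r))"
  have R0: "R0 > 0" using assms by linarith
  have "V > 0" unfolding V_def using assms(1-3) by (rule sweep_Vc_pos)
  then have s: "0 \<le> V * t / R0" "V * t / R0 \<le> pi / 2"
    using t R0 unfolding V_def[symmetric] by (auto simp: field_simps)
  have "0 < a" unfolding a_def using assms(1,3) by (rule arcsin_ratio_pos)
  have "0 \<le> r / R0" "r / R0 \<le> 1" using assms R0 by simp_all
  then have "sin a = r / R0" unfolding a_def by (intro sin_arcsin) linarith+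
  then have "c \<le> sin a ^ 2 / 2"
    unfolding c_def using sq_div_le_half_sq_ratio[of r R0] assms R0 by simp
  moreover have "0 < c" unfolding c_def using assms R0 by simp
  ultimately have "c * (((2 * pi + V * t / R0) / (2 * pi + a)) ^ 2 - 1) < 1 - cos (V * t / R0)"
    using scaled_sq_ratio_excess_lt_one_minus_cos[OF \<open>0 < a\<close> s] by blast
  then show ?thesis
    using sweep_f_at_Vc[OF assms(1-3) refl, of t] unfolding V_def[symmetric] a_def[symmetric] c_def
    by linarith
qed

theorem theorem5:
  fixes r VT R0 :: real
  assumes "r > 0" and "VT > 0" and "R0 \<ge> r"
  shows "(\<exists>tstar \<in> {0 .. pi * R0 / (2 * sweep_Vc R0 r VT)}.
            (\<forall>t \<in> {0 .. pi * R0 / (2 * sweep_Vc R0 r VT)}.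
               sweep_f R0 r VT tstar (sweep_Vc R0 r VT) \<le> sweep_f R0 r VT t (sweep_Vc R0 r VT))
            \<and> sweep_f R0 r VT tstar (sweep_Vc R0 r VT) > 0)
       \<and> (\<forall>t \<in> {0 .. pi * R0 / (2 * sweep_Vc R0 r VT)}. sweep_f R0 r VT t (sweep_Vc R0 r VT) \<ge> 0)"
proof -
  define V where "V = sweep_Vc R0 r VT"
  define T where "T = pi * R0 / (2 * V)"
  have "V > 0" unfolding V_def using assms by (rule sweep_Vc_pos)
  then have "{0..T} \<noteq> {}" using assms unfolding T_def by simp
  moreover have "continuous_on {0..T} (\<lambda>t. sweep_f R0 r VT t V)"
    unfolding sweep_f_def by (intro continuous_intros) (use assms in auto)
  ultimately obtain ts where "ts \<in> {0..T}" "\<forall>t\<in>{0..T}. sweep_f R0 r VT ts V \<le> sweep_f R0 r VT t V"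
    using continuous_attains_inf[OF compact_Icc] by blast
  then show ?thesis
    using sweep_f_at_Vc_pos[OF assms] unfolding V_def[symmetric] T_def[symmetric]
    by (meson less_imp_le)
qed

end
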